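(* Let $n\ge3$, $\mathbf{A}=\{a_1,\dots,a_n\}$, and $\mathbf{S}_2^n=\{XY : X,Y\in\mathbf{A}^*\setminus\{\emptyset\},\ \overline{\nu}(X)=\overline{\nu}(Y)\}$. Define $$W=(a_{n-2}a_{n-1})(a_{n-3}a_{n-2})\cdots(a_1a_2)\; a_n\; a_{n-2}a_{n-3}\cdots a_2a_1a_2\cdots a_{n-3}a_{n-2}\; a_n,$$ i.e. the concatenation of the pairs $a_ia_{i+1}$ for $i=n-2,n-3,\dots,1$, followed by $a_n$, followed by the palindrome $a_{n-2}a_{n-3}\cdots a_2a_1a_2\cdots a_{n-3}a_{n-2}$ (which is just $a_1$ when $n=3$), followed by $a_n$. Then $|W|=4n-7$ and $W$ is a crucial word with respect to $\mathbf{S}_2^n$.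
   Context: A word over $\mathbf{A}$ is a finite sequence of letters; $\mathbf{A}^*$ is the set of all words; $|W|$ is the length of $W$. A subword is a block of consecutive letters. For a word $X$, $\overline{\nu}(X)=(\nu_1(X),\dots,\nu_n(X))$ where $\nu_i(X)$ is the number of occurrences of $a_i$ in $X$. For $\mathbf{S}\subseteq\mathbf{A}^*$, a word is free from $\mathbf{S}$ if none of its subwords belongs to $\mathbf{S}$. A word $X$ free from $\mathbf{S}$ is crucial with respect to $\mathbf{S}$ if for every letter $a\in\mathbf{A}$ the word $Xa$ contains a subword belonging to $\mathbf{S}$. *)

theory Defs
  imports Main "HOL-Library.Sublist"
begin

(* Letters a_1..a_n are represented by the naturals 1..n; words are lists. *)
definition alphabet :: "nat \<Rightarrow> nat set" where
  "alphabet n = {1..n}"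

definition parikh :: "nat \<Rightarrow> nat list \<Rightarrow> nat list" where
  "parikh n X = map (\<lambda>i. count_list X i) [1..<n+1]"

definition S2 :: "nat \<Rightarrow> nat list set" where
  "S2 n = {X @ Y | X Y. X \<noteq> [] \<and> Y \<noteq> [] \<and> set X \<subseteq> alphabet n \<and> set Y \<subseteq> alphabet n
                      \<and> parikh n X = parikh n Y}"

(* subword = block of consecutive letters: library 'sublist' *)
definition free_from :: "nat list set \<Rightarrow> nat list \<Rightarrow> bool" where
  "free_from S X \<longleftrightarrow> (\<forall>w. sublist w X \<longrightarrow> w \<notin> S)"

definition crucial :: "nat set \<Rightarrow> nat list set \<Rightarrow> nat list \<Rightarrow> bool" where
  "crucial A S X \<longleftrightarrow> set X \<subseteq> A \<and> free_from S X \<and> (\<forall>a\<in>A. \<not> free_from S (X @ [a]))"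

definition Wword :: "nat \<Rightarrow> nat list" where
  "Wword n = concat (map (\<lambda>i. [i, i+1]) (rev [1..<n-1])) @ [n]
             @ (rev [2..<n-1] @ [1] @ [2..<n-1]) @ [n]"

end

theory Submission
  imports Defs "HOL-Library.Multiset"
begin

(* An abelian square X Y contains every letter an even number of times, so if it occurred in W
   the prefixes of W ending just before and just after it would have the same set of letters
   of odd multiplicity. For W the length of a prefix can be read off from this set, hence W is
   free from S_2^n. Conversely, W a ends in an abelian square for every letter a: in a_n a_n
   for a = a_n, and otherwise in one whose first half starts with the pair a_(a-1) a_a (or
   with the first a_n, for a = a_1) and ends with the descending block a_n a_(n-2) ... *)

definition pair_word :: "nat list \<Rightarrow> nat list" where
  "pair_word xs = concat (map (\<lambda>i. [i, i + 1]) xs)"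

definition odd_letters :: "nat list \<Rightarrow> nat set" where
  "odd_letters xs = {a. odd (count_list xs a)}"

lemma pair_word_Nil [simp]: "pair_word [] = []"
  and pair_word_Cons [simp]: "pair_word (x # xs) = x # Suc x # pair_word xs"
  and pair_word_append [simp]: "pair_word (xs @ ys) = pair_word xs @ pair_word ys"
  by (simp_all add: pair_word_def)

lemma length_pair_word [simp]: "length (pair_word xs) = 2 * length xs"
  by (induction xs) auto

lemma set_pair_word_rev_upt: "set (pair_word (rev [i..<j])) \<subseteq> {i..j}"
  by (induction j) auto

lemma count_list_upt: "count_list [i..<j] a = (if i \<le> a \<and> a < j then 1 else 0)"
  by (induction j) auto

lemma count_list_pair_word_rev_upt:
  "count_list (pair_word (rev [i..<j])) a =
     (if i \<le> a \<and> a < j then 1 else 0) + (if i < a \<and> a \<le> j then 1 else 0)"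
  by (induction j) auto

lemma upt_split: "i \<le> j \<Longrightarrow> j \<le> k \<Longrightarrow> [i..<k] = [i..<j] @ [j..<k]"
  by (metis le_Suc_ex upt_add_eq_append)

lemma take_eq_prefix: "w = xs @ ys \<Longrightarrow> length xs = k \<Longrightarrow> take k w = xs"
  by simp

lemma Min_atLeastAtMost [simp]: "i \<le> j \<Longrightarrow> Min {i..j} = (i::nat)"
  by (rule Min_eqI) auto

lemma odd_letters_Nil [simp]: "odd_letters [] = {}"
  and odd_letters_Cons [simp]:
    "odd_letters (a # xs) =
       (if a \<in> odd_letters xs then odd_letters xs - {a} else insert a (odd_letters xs))"
  by (auto simp: odd_letters_def)

lemma odd_letters_append:
  "odd_letters (xs @ ys) = (odd_letters xs - odd_letters ys) \<union> (odd_letters ys - odd_letters xs)"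
  by (auto simp: odd_letters_def)

lemma odd_letters_rev [simp]: "odd_letters (rev xs) = odd_letters xs"
  by (simp add: odd_letters_def)

lemma odd_letters_upt [simp]: "odd_letters [i..<j] = {i..<j}"
  by (auto simp: odd_letters_def count_list_upt)

lemma odd_letters_pair_word_rev_upt [simp]:
  "odd_letters (pair_word (rev [i..<j])) = (if i < j then {i, j} else {})"
  by (auto simp: odd_letters_def count_list_pair_word_rev_upt)

lemma S2_nonempty_even: "w \<in> S2 n \<Longrightarrow> w \<noteq> [] \<and> odd_letters w = {}"
proof -
  assume "w \<in> S2 n"
  then obtain X Y where w: "w = X @ Y" "X \<noteq> []" "set X \<subseteq> alphabet n" "set Y \<subseteq> alphabet n"
    and parikh: "parikh n X = parikh n Y"
    unfolding S2_def by blast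
  have "count_list X a = count_list Y a" for a
  proof (cases "a \<in> alphabet n")
    case True
    then have "a \<in> set [1..<n+1]" by (auto simp: alphabet_def)
    then show ?thesis using parikh unfolding parikh_def map_eq_conv by blast
  next
    case False
    then have "a \<notin> set X" "a \<notin> set Y" using w(3,4) by auto
    then show ?thesis by (simp add: count_notin)
  qed
  then show ?thesis using w(1,2) by (auto simp: odd_letters_def)
qed

lemma abelian_square_in_S2:
  assumes "X \<noteq> []" "set X \<subseteq> alphabet n" "mset X = mset Y"
  shows "X @ Y \<in> S2 n"
proof -
  have "set Y = set X" "Y \<noteq> []" using assms(1,3) by (metis set_mset_mset, metis mset_zero_iff)
  moreover have "parikh n X = parikh n Y" using assms(3) by (simp add: parikh_def flip: count_mset)
  ultimately show ?thesis using assms(1,2) unfolding S2_def by blast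
qed

lemma not_free_from_S2_if_abelian_square:
  assumes "w = u @ X @ Y" "X \<noteq> []" "set X \<subseteq> alphabet n" "mset X = mset Y"
  shows "\<not> free_from (S2 n) w"
  using assms abelian_square_in_S2 unfolding free_from_def sublist_def by blast

lemma free_from_S2_if_inj_on_odd_letters_take:
  assumes "inj_on (\<lambda>k. odd_letters (take k w)) {..length w}"
  shows "free_from (S2 n) w"
  unfolding free_from_def
proof (intro allI impI notI)
  fix v assume "sublist v w" and "v \<in> S2 n"
  then obtain u s where w: "w = u @ v @ s" unfolding sublist_def by blast
  then have u: "take (length u) w = u" "take (length u + length v) w = u @ v"
    and len: "length u + length v \<le> length w"
    by auto
  have "odd_letters (u @ v) = odd_letters u"
    using S2_nonempty_even[OF \<open>v \<in> S2 n\<close>] by (simp add: odd_letters_append)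
  then have "length u = length u + length v"
    using u len by (intro inj_onD[OF assms]) auto
  then show False using S2_nonempty_even[OF \<open>v \<in> S2 n\<close>] by simp
qed

lemma Wword_eq:
  "Wword n = pair_word (rev [1..<n-1]) @ [n] @ rev [2..<n-1] @ [1] @ [2..<n-1] @ [n]"
  by (simp add: Wword_def pair_word_def)

lemma length_Wword: "n \<ge> 3 \<Longrightarrow> length (Wword n) = 4 * n - 7"
  by (simp add: Wword_eq)

lemma set_Wword: "n \<ge> 1 \<Longrightarrow> set (Wword n) \<subseteq> alphabet n"
  using set_pair_word_rev_upt[of 1 "n - 1"] by (fastforce simp: Wword_eq alphabet_def)

lemma odd_letters_take_Wword_even:
  assumes "1 \<le> j" "j \<le> n - 1"
  shows "odd_letters (take (2 * (n-1-j)) (Wword n)) = (if j < n-1 then {j, n-1} else {})"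
  using assms upt_split[of 1 j "n - 1"] by (simp add: Wword_eq)

lemma odd_letters_take_Wword_odd:
  assumes "2 \<le> j" "j \<le> n - 1"
  shows "odd_letters (take (2 * (n-1-j) + 1) (Wword n)) =
           (if j < n-1 then {j-1, j, n-1} else {n-2})"
proof -
  have "[1..<j] = [1..<j-1] @ [j-1]"
    using assms upt_Suc_append[of 1 "j - 1"] by simp
  then have "take (2 * (n-1-j) + 1) (Wword n) = pair_word (rev [j..<n-1]) @ [j-1]"
    using assms upt_split[of 1 j "n - 1"] by (simp add: Wword_eq)
  then show ?thesis
    using assms by (auto simp: odd_letters_append)
qed

lemma odd_letters_take_Wword_descent:
  assumes "2 \<le> j" "j \<le> n - 1"
  shows "odd_letters (take (2*n - 3 + (n-1-j)) (Wword n)) = insert 1 {j..n}"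
proof -
  have "Wword n = (pair_word (rev [1..<n-1]) @ [n] @ rev [j..<n-1]) @
                    rev [2..<j] @ [1] @ [2..<n-1] @ [n]"
    using assms upt_split[of 2 j "n - 1"] by (simp add: Wword_eq)
  then have "take (2*n - 3 + (n-1-j)) (Wword n) = pair_word (rev [1..<n-1]) @ [n] @ rev [j..<n-1]"
    using assms by (simp add: take_eq_prefix)
  then show ?thesis
    using assms by (auto simp: odd_letters_append)
qed

lemma odd_letters_take_Wword_ascent:
  assumes "2 \<le> j" "j \<le> n - 1"
  shows "odd_letters (take (3*n - 5 + (j-2)) (Wword n)) = {j..n}"
proof -
  have "Wword n = (pair_word (rev [1..<n-1]) @ [n] @ rev [2..<n-1] @ [1] @ [2..<j]) @
                    [j..<n-1] @ [n]"
    using assms upt_split[of 2 j "n - 1"] by (simp add: Wword_eq)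
  then have "take (3*n - 5 + (j-2)) (Wword n) =
               pair_word (rev [1..<n-1]) @ [n] @ rev [2..<n-1] @ [1] @ [2..<j]"
    using assms by (simp add: take_eq_prefix)
  then show ?thesis
    using assms by (auto simp: odd_letters_append)
qed

lemma odd_letters_Wword: "n \<ge> 3 \<Longrightarrow> odd_letters (Wword n) = {n-1}"
  by (auto simp: Wword_eq odd_letters_append)

(* The odd-letter sets of the prefixes are {j, n-1} and {j-1, j, n-1} inside the block of
   pairs, then insert 1 {j..n}, {j..n} and finally {n-1}; the degenerate cases are {} and {n-2}. *)
definition Wword_prefix_length :: "nat \<Rightarrow> nat set \<Rightarrow> nat" where
  "Wword_prefix_length n S =
    (if n \<in> S then
       if 1 \<in> S then 2*n - 3 + (n - 1 - Min (S - {1})) else 3*n - 5 + (Min S - 2)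
     else if n - 1 \<in> S then
       if S = {n - 1} then 4*n - 7
       else if card S = 2 then 2 * (n - 1 - Min S) else 2 * (n - 2 - Min S) + 1
     else if S = {} then 0 else 1)"

lemma Wword_prefix_length_odd_letters_take:
  assumes "n \<ge> 3" "k \<le> length (Wword n)"
  shows "Wword_prefix_length n (odd_letters (take k (Wword n))) = k"
proof -
  consider "even k" "k \<le> 2*n - 4" | "odd k" "k \<le> 2*n - 4" | "2*n - 3 \<le> k" "k \<le> 3*n - 6"
    | "3*n - 5 \<le> k" "k < 4*n - 7" | "k = 4*n - 7"
    using assms length_Wword[OF assms(1)] by linarith
  then show ?thesis
  proof cases
    case 1
    define j where "j = n - 1 - k div 2"
    have j: "1 \<le> j" "j \<le> n - 1" "k = 2 * (n-1-j)" using 1 assms(1) by (auto simp: j_def elim: evenE)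
    show ?thesis
      using odd_letters_take_Wword_even[OF j(1,2)] j assms(1)
      by (auto simp: Wword_prefix_length_def)
  next
    case 2
    define j where "j = n - 1 - k div 2"
    have j: "2 \<le> j" "j \<le> n - 1" "k = 2 * (n-1-j) + 1" using 2 assms(1) by (auto simp: j_def elim: oddE)
    show ?thesis
      using odd_letters_take_Wword_odd[OF j(1,2)] j assms(1)
      by (auto simp: Wword_prefix_length_def card_insert_if)
  next
    case 3
    define j where "j = 3*n - 4 - k"
    have j: "2 \<le> j" "j \<le> n - 1" "k = 2*n - 3 + (n-1-j)" using 3 assms(1) by (auto simp: j_def)
    have "insert 1 {j..n} - {1} = {j..n}" using j by auto
    then show ?thesis
      using odd_letters_take_Wword_descent[OF j(1,2)] j assms(1)
      by (auto simp: Wword_prefix_length_def)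
  next
    case 4
    define j where "j = k + 7 - 3*n"
    have j: "2 \<le> j" "j \<le> n - 1" "k = 3*n - 5 + (j-2)" using 4 assms(1) by (auto simp: j_def)
    show ?thesis
      using odd_letters_take_Wword_ascent[OF j(1,2)] j assms(1)
      by (auto simp: Wword_prefix_length_def)
  next
    case 5
    then show ?thesis
      using odd_letters_Wword assms length_Wword by (auto simp: Wword_prefix_length_def)
  qed
qed

lemma free_from_S2_Wword: "n \<ge> 3 \<Longrightarrow> free_from (S2 n) (Wword n)"
  by (rule free_from_S2_if_inj_on_odd_letters_take,
      rule inj_on_inverseI[where g = "Wword_prefix_length n"])
    (simp add: Wword_prefix_length_odd_letters_take)

lemma not_free_from_S2_Wword_snoc:
  assumes "n \<ge> 3" "a \<in> alphabet n"
  shows "\<not> free_from (S2 n) (Wword n @ [a])"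
proof -
  consider "a = n" | "a = 1" | "2 \<le> a" "a \<le> n - 1"
    using assms(2) by (force simp: alphabet_def)
  then show ?thesis
  proof cases
    case 1
    have W: "Wword n @ [a] =
            (pair_word (rev [1..<n-1]) @ [n] @ rev [2..<n-1] @ [1] @ [2..<n-1]) @ [n] @ [n]"
      using 1 by (simp add: Wword_eq)
    show ?thesis
      by (rule not_free_from_S2_if_abelian_square[OF W]) (use assms in \<open>auto simp: alphabet_def\<close>)
  next
    case 2
    have W: "Wword n @ [a] =
            pair_word (rev [1..<n-1]) @ ([n] @ rev [2..<n-1] @ [1]) @ ([2..<n-1] @ [n] @ [1])"
      using 2 by (simp add: Wword_eq)
    show ?thesis
      by (rule not_free_from_S2_if_abelian_square[OF W]) (use assms in \<open>auto simp: alphabet_def\<close>)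
  next
    case 3
    have W: "Wword n @ [a] = pair_word (rev [a..<n-1]) @
            (pair_word (rev [1..<a]) @ [n] @ rev [a..<n-1]) @
            (rev [2..<a] @ [1] @ [2..<n-1] @ [n] @ [a])"
      using 3 upt_split[of 1 a "n - 1"] upt_split[of 2 a "n - 1"] by (simp add: Wword_eq)
    have mset: "mset (pair_word (rev [1..<a]) @ [n] @ rev [a..<n-1]) =
                mset (rev [2..<a] @ [1] @ [2..<n-1] @ [n] @ [a])"
      using 3 by (auto simp: multiset_eq_iff count_mset count_list_upt count_list_pair_word_rev_upt
                       simp del: mset_upt mset_rev mset_append)
    have pairs: "set (pair_word (rev [1..<a])) \<subseteq> alphabet n"
      using 3 set_pair_word_rev_upt[of 1 a] by (fastforce simp: alphabet_def)
    show ?thesis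
      by (rule not_free_from_S2_if_abelian_square[OF W _ _ mset])
        (use 3 pairs in \<open>auto simp: alphabet_def\<close>)
  qed
qed

theorem mainTheorem5:
  fixes n :: nat
  assumes "n \<ge> 3"
  shows "length (Wword n) = 4 * n - 7 \<and> crucial (alphabet n) (S2 n) (Wword n)"
  using assms length_Wword set_Wword free_from_S2_Wword not_free_from_S2_Wword_snoc
  unfolding crucial_def by simp

end
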